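(* Let $d\ge 1$, $T\ge 1$, let $\mathcal{X}\subseteq\mathbb{R}^d$ be a non-empty closed convex set containing $\mathbf{0}$ with finite diameter $D=\max_{x,y\in\mathcal{X}}\|x-y\|$, and let $0<\mu\le L$. Let $f_1,\dots,f_T:\mathcal{X}\to[0,\infty)$ be differentiable functions such that, for every $t$ and all $x,y\in\mathcal{X}$, $\frac{\mu}{2}\|y-x\|^2\le f_t(y)-f_t(x)-\langle\nabla f_t(x),y-x\rangle\le\frac{L}{2}\|y-x\|^2$, and such that there is a finite constant $G$ with $\max_{x\in\mathcal{X}}\|\nabla f_t(x)\|=G$ for all $t$. Let $x_0=\mathbf{0}$. Then the OMGD algorithm with $K=\lceil\frac{L+\mu}{2\mu}\ln4\rceil$ satisfies $$C_{\mathcal{A}_o}-C_{\mathsf{OPT}}\le\Big(2G+D\Big(10-\frac{\mu}{2(\mu+4)}\Big)\Big)(\|x_1^\star\|+\mathcal{P}_T^\star).$$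
   Context: $x_t^\star=\arg\min_{x\in\mathcal{X}}f_t(x)$, $\mathcal{P}_T^\star=\sum_{t=2}^T\|x_t^\star-x_{t-1}^\star\|$. Quadratic-switching cost of $(y_1,\dots,y_T)\in\mathcal{X}^T$ with $y_0=x_0$: $\sum_{t=1}^T\big(f_t(y_t)+\frac12\|y_t-y_{t-1}\|^2\big)$; $C_{\mathsf{OPT}}$ is its minimum over $\mathcal{X}^T$. OMGD with parameter $K$: $x_1=x_0$; for $t=2,\dots,T$, $z_t^{(0)}=x_{t-1}$, $z_t^{(k)}=\Pi_{\mathcal{X}}\big(z_t^{(k-1)}-\frac1L\nabla f_{t-1}(z_t^{(k-1)})\big)$ ($k=1,\dots,K$), $x_t=z_t^{(K)}$, where $\Pi_{\mathcal{X}}$ is Euclidean projection onto $\mathcal{X}$. $C_{\mathcal{A}_o}$ is the quadratic-switching cost of $(x_1,\dots,x_T)$. *)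

theory Defs
  imports "HOL-Analysis.Analysis"
begin

text \<open>Minimiser x_t^star of f_t over X (unique under strong convexity on a compact convex set).\<close>
definition xstar :: "'a set \<Rightarrow> (nat \<Rightarrow> 'a \<Rightarrow> real) \<Rightarrow> nat \<Rightarrow> 'a" where
  "xstar X f t = (SOME x. x \<in> X \<and> (\<forall>y\<in>X. f t x \<le> f t y))"

definition path_length :: "'a::real_normed_vector set \<Rightarrow> (nat \<Rightarrow> 'a \<Rightarrow> real) \<Rightarrow> nat \<Rightarrow> real" where
  "path_length X f T = (\<Sum>t=2..T. norm (xstar X f t - xstar X f (t - 1)))"

definition qs_cost :: "(nat \<Rightarrow> 'a::real_normed_vector \<Rightarrow> real) \<Rightarrow> nat \<Rightarrow> 'a \<Rightarrow> (nat \<Rightarrow> 'a) \<Rightarrow> real" where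
  "qs_cost f T x0 y = (\<Sum>t=1..T. f t (y t) + (1/2) * (norm (y t - (if t = 1 then x0 else y (t - 1))))\<^sup>2)"

definition C_OPT :: "'a::real_normed_vector set \<Rightarrow> (nat \<Rightarrow> 'a \<Rightarrow> real) \<Rightarrow> nat \<Rightarrow> 'a \<Rightarrow> real" where
  "C_OPT X f T x0 = Inf {qs_cost f T x0 y | y. \<forall>t\<in>{1..T}. y t \<in> X}"

definition pgd_step :: "'a::euclidean_space set \<Rightarrow> real \<Rightarrow> ('a \<Rightarrow> 'a) \<Rightarrow> 'a \<Rightarrow> 'a" where
  "pgd_step X L g z = closest_point X (z - (1/L) *\<^sub>R g z)"

text \<open>OMGD iterates: x_1 = x_0, x_t = (pgd step for f_(t-1)) iterated K times from x_(t-1).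
  Index 0 is set to x0 for convenience.\<close>
fun omgd :: "'a::euclidean_space set \<Rightarrow> real \<Rightarrow> (nat \<Rightarrow> 'a \<Rightarrow> 'a) \<Rightarrow> nat \<Rightarrow> 'a \<Rightarrow> nat \<Rightarrow> 'a" where
  "omgd X L grad K x0 0 = x0"
| "omgd X L grad K x0 (Suc 0) = x0"
| "omgd X L grad K x0 (Suc (Suc n)) =
     (pgd_step X L (grad (Suc n)) ^^ K) (omgd X L grad K x0 (Suc n))"

end

theory Submission
  imports Defs
begin

text \<open>
  A projected gradient step for an \<open>L\<close>-smooth, \<open>\<mu>\<close>-strongly convex function contracts the squared
  distance to its minimiser by the factor \<open>(L - \<mu>) / (L + \<mu>)\<close>; with the chosen \<open>K\<close> the \<open>K\<close> steps
  of one OMGD round at least halve the distance to \<open>x\<^sup>*\<^sub>t\<close>. The tracking error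
  \<open>e\<^sub>t = \<parallel>x\<^sub>t - x\<^sup>*\<^sub>t\<parallel>\<close> therefore obeys \<open>e\<^sub>t\<^sub>+\<^sub>1 \<le> e\<^sub>t / 2 + \<parallel>x\<^sup>*\<^sub>t\<^sub>+\<^sub>1 - x\<^sup>*\<^sub>t\<parallel>\<close>, whence
  \<open>\<Sum> e\<^sub>t \<le> 2 (e\<^sub>1 + P\<^sup>*\<^sub>T)\<close>. By convexity the hitting cost exceeds the optimum by at most \<open>G e\<^sub>t\<close>,
  and since \<open>\<parallel>x\<^sub>t\<^sub>+\<^sub>1 - x\<^sub>t\<parallel> \<le> min D (3/2 e\<^sub>t)\<close> the switching cost is at most \<open>3/4 D e\<^sub>t\<close>.
  As \<open>C\<^sub>O\<^sub>P\<^sub>T\<close> is at least \<open>\<Sum> f\<^sub>t(x\<^sup>*\<^sub>t)\<close>, the regret is at most \<open>(2 G + 3/2 D) (e\<^sub>1 + P\<^sup>*\<^sub>T)\<close>,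
  which is sharper than the stated constant.
\<close>

lemma minimizer_variational_inequality:
  fixes X :: "'a::real_inner set"
  assumes X: "convex X" and L: "0 < L"
    and xs: "xs \<in> X" and min: "\<forall>y\<in>X. F xs \<le> F y"
    and smooth: "\<And>y. y \<in> X \<Longrightarrow> F y - F xs - g \<bullet> (y - xs) \<le> L / 2 * (norm (y - xs))\<^sup>2"
    and y: "y \<in> X"
  shows "g \<bullet> (y - xs) \<ge> 0"
proof (rule ccontr)
  define c where "c = g \<bullet> (y - xs)"
  define n where "n = (norm (y - xs))\<^sup>2"
  assume "\<not> g \<bullet> (y - xs) \<ge> 0"
  then have c: "c < 0" by (simp add: c_def)
  then have "n > 0" by (auto simp: c_def n_def)
  \<comment> \<open>moving a fraction s towards y gains s c but loses at most L s^2 n / 2; this s makes the gain win\<close>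
  define s where "s = min 1 (- c / (L * n))"
  have s: "0 < s" "s \<le> 1" "s * (L * n) \<le> - c"
    using c \<open>n > 0\<close> L by (auto simp: s_def min_def field_simps)
  define ys where "ys = xs + s *\<^sub>R (y - xs)"
  have "ys \<in> X"
    using convexD_alt[OF X xs y, of s] s by (simp add: ys_def algebra_simps)
  have "0 \<le> F ys - F xs" using min \<open>ys \<in> X\<close> by auto
  also have "\<dots> \<le> s * c + L / 2 * (s\<^sup>2 * n)"
    using smooth[OF \<open>ys \<in> X\<close>] by (simp add: ys_def c_def n_def power_mult_distrib)
  also have "\<dots> \<le> s * c / 2"
    using mult_left_mono[OF s(3), of s] s(1) by (simp add: power2_eq_square field_simps)
  finally show False using s(1) c by (simp add: zero_le_mult_iff)
qed

lemma pgd_step_in: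
  assumes "closed X" "X \<noteq> {}"
  shows "pgd_step X L g z \<in> X"
  unfolding pgd_step_def using closest_point_in_set[OF assms] .

lemma pgd_step_iterate_in:
  assumes "closed X" "X \<noteq> {}" "z \<in> X"
  shows "(pgd_step X L g ^^ n) z \<in> X"
  by (induction n) (auto simp: assms pgd_step_in)

lemma pgd_step_contraction:
  fixes X :: "'a::euclidean_space set"
  assumes X: "convex X" "closed X" "X \<noteq> {}"
    and mu: "0 < \<mu>" "\<mu> \<le> L"
    and z: "z \<in> X" and xs: "xs \<in> X" and min: "\<forall>y\<in>X. F xs \<le> F y"
    and strong_cvx: "\<And>x y. x \<in> X \<Longrightarrow> y \<in> X \<Longrightarrow> \<mu> / 2 * (norm (y - x))\<^sup>2 \<le> F y - F x - g x \<bullet> (y - x)"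
    and smooth: "\<And>x y. x \<in> X \<Longrightarrow> y \<in> X \<Longrightarrow> F y - F x - g x \<bullet> (y - x) \<le> L / 2 * (norm (y - x))\<^sup>2"
  shows "(norm (pgd_step X L g z - xs))\<^sup>2 \<le> (L - \<mu>) / (L + \<mu>) * (norm (z - xs))\<^sup>2"
proof -
  have L: "0 < L" using mu by simp
  define w where "w = pgd_step X L g z"
  have w: "w \<in> X" unfolding w_def using pgd_step_in[OF X(2,3)] .
  have proj: "L * ((z - w) \<bullet> (xs - w)) \<le> g z \<bullet> (xs - w)"
  proof -
    have "(z - (1 / L) *\<^sub>R g z - w) \<bullet> (xs - w) \<le> 0"
      unfolding w_def pgd_step_def by (rule closest_point_dot[OF X(1,2) xs])
    moreover have "(z - (1 / L) *\<^sub>R g z - w) \<bullet> (xs - w) = (z - w) \<bullet> (xs - w) - g z \<bullet> (xs - w) / L"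
      by (simp add: inner_diff_left add_divide_distrib[symmetric])
    ultimately show ?thesis using L by (simp add: pos_le_divide_eq mult.commute)
  qed
  have up: "F w - F z - g z \<bullet> (w - z) \<le> L / 2 * (norm (w - z))\<^sup>2" using smooth[OF z w] .
  have low: "\<mu> / 2 * (norm (xs - z))\<^sup>2 \<le> F xs - F z - g z \<bullet> (xs - z)" using strong_cvx[OF z xs] .
  have growth: "\<mu> / 2 * (norm (w - xs))\<^sup>2 \<le> F w - F xs"
    using minimizer_variational_inequality[OF X(1) L xs min smooth[OF xs] w] strong_cvx[OF xs w]
    by linarith
  define a where "a = z - xs"
  define b where "b = w - xs"
  have sq_wz: "(norm (w - z))\<^sup>2 = a \<bullet> a - 2 * (a \<bullet> b) + b \<bullet> b"
    unfolding a_def b_def power2_norm_eq_inner by (simp add: algebra_simps inner_commute)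
  have proj_ab: "(z - w) \<bullet> (xs - w) = b \<bullet> b - a \<bullet> b"
    unfolding a_def b_def by (simp add: algebra_simps inner_commute)
  have sq_a: "(norm (xs - z))\<^sup>2 = a \<bullet> a" "(norm (z - xs))\<^sup>2 = a \<bullet> a"
    and sq_b: "(norm (w - xs))\<^sup>2 = b \<bullet> b"
    unfolding a_def b_def power2_norm_eq_inner by (simp_all add: algebra_simps inner_commute)
  have "g z \<bullet> (w - z) + g z \<bullet> (xs - w) = g z \<bullet> (xs - z)"
    by (simp add: inner_diff_right)
  \<comment> \<open>in the sum of \<open>up\<close>, \<open>low\<close>, \<open>proj\<close> and \<open>growth\<close> all values of \<open>F\<close> and \<open>g\<close> cancel\<close>
  then have "(L + \<mu>) * (b \<bullet> b) \<le> (L - \<mu>) * (a \<bullet> a)"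
    using up[unfolded sq_wz] low[unfolded sq_a] proj[unfolded proj_ab] growth[unfolded sq_b]
    by (simp add: algebra_simps)
  then have "(L + \<mu>) * (norm (w - xs))\<^sup>2 \<le> (L - \<mu>) * (norm (z - xs))\<^sup>2"
    unfolding sq_a sq_b .
  then show ?thesis using mu by (simp add: w_def field_simps)
qed

lemma pgd_step_iterate_contraction:
  fixes X :: "'a::euclidean_space set"
  assumes X: "convex X" "closed X" "X \<noteq> {}"
    and mu: "0 < \<mu>" "\<mu> \<le> L"
    and z: "z \<in> X" and xs: "xs \<in> X" and min: "\<forall>y\<in>X. F xs \<le> F y"
    and strong_cvx: "\<And>x y. x \<in> X \<Longrightarrow> y \<in> X \<Longrightarrow> \<mu> / 2 * (norm (y - x))\<^sup>2 \<le> F y - F x - g x \<bullet> (y - x)"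
    and smooth: "\<And>x y. x \<in> X \<Longrightarrow> y \<in> X \<Longrightarrow> F y - F x - g x \<bullet> (y - x) \<le> L / 2 * (norm (y - x))\<^sup>2"
  shows "(norm ((pgd_step X L g ^^ n) z - xs))\<^sup>2 \<le> ((L - \<mu>) / (L + \<mu>)) ^ n * (norm (z - xs))\<^sup>2"
proof (induction n)
  case 0
  show ?case by simp
next
  case (Suc n)
  define q where "q = (L - \<mu>) / (L + \<mu>)"
  have "0 \<le> q" using mu by (simp add: q_def)
  have "(pgd_step X L g ^^ n) z \<in> X" using pgd_step_iterate_in[OF X(2,3) z] .
  then have "(norm ((pgd_step X L g ^^ Suc n) z - xs))\<^sup>2 \<le> q * (norm ((pgd_step X L g ^^ n) z - xs))\<^sup>2"
    unfolding q_def using pgd_step_contraction[OF X mu _ xs min strong_cvx smooth] by simp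
  also have "\<dots> \<le> q * (q ^ n * (norm (z - xs))\<^sup>2)"
    using mult_left_mono[OF Suc.IH \<open>0 \<le> q\<close>] by (simp add: q_def)
  finally show ?case by (simp add: q_def)
qed

lemma contraction_factor_power_le:
  fixes \<mu> L a :: real
  assumes mu: "0 < \<mu>" "\<mu> \<le> L" and a: "0 < a"
    and K: "(L + \<mu>) / (2 * \<mu>) * ln a \<le> real K"
  shows "((L - \<mu>) / (L + \<mu>)) ^ K \<le> 1 / a"
proof -
  define r where "r = 2 * \<mu> / (L + \<mu>)"
  have "(L - \<mu>) / (L + \<mu>) = 1 - r" "0 \<le> 1 - r"
    using mu by (simp_all add: r_def field_simps)
  moreover have "ln a \<le> r * real K"
    using K mu by (simp add: r_def field_simps)
  moreover have "(1 - r) ^ K \<le> exp (- r) ^ K"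
    using \<open>0 \<le> 1 - r\<close> exp_ge_add_one_self[of "- r"] by (simp add: power_mono)
  ultimately have "((L - \<mu>) / (L + \<mu>)) ^ K \<le> exp (- ln a)"
    by (simp add: exp_of_nat_mult[symmetric] mult.commute order_trans)
  then show ?thesis using a by (simp add: exp_minus inverse_eq_divide)
qed

lemma xstar_minimizes:
  assumes "compact X" "X \<noteq> {}" "continuous_on X (f t)"
  shows "xstar X f t \<in> X \<and> (\<forall>y\<in>X. f t (xstar X f t) \<le> f t y)"
proof -
  have "\<exists>x. x \<in> X \<and> (\<forall>y\<in>X. f t x \<le> f t y)"
    using continuous_attains_inf[OF assms] by blast
  then show ?thesis unfolding xstar_def by (rule someI_ex)
qed

lemma sum_minima_le_C_OPT:
  assumes "X \<noteq> {}" and min: "\<And>t. t \<in> {1..T} \<Longrightarrow> \<forall>y\<in>X. f t (xs t) \<le> f t y"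
  shows "(\<Sum>t=1..T. f t (xs t)) \<le> C_OPT X f T x0"
  unfolding C_OPT_def
proof (rule cInf_greatest)
  obtain x where "x \<in> X" using assms(1) by blast
  then show "{qs_cost f T x0 y |y. \<forall>t\<in>{1..T}. y t \<in> X} \<noteq> {}"
    by (auto intro!: exI[of _ "\<lambda>_. x"])
next
  fix v assume "v \<in> {qs_cost f T x0 y |y. \<forall>t\<in>{1..T}. y t \<in> X}"
  then obtain y where v: "v = qs_cost f T x0 y" and y: "\<forall>t\<in>{1..T}. y t \<in> X" by blast
  have "f t (xs t) \<le> f t (y t) + 1 / 2 * (norm (y t - (if t = 1 then x0 else y (t - 1))))\<^sup>2"
    if "t \<in> {1..T}" for t
  proof -
    have "f t (xs t) \<le> f t (y t)" using min[OF that] y that by blast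
    then show ?thesis by (simp add: add_increasing2)
  qed
  then show "(\<Sum>t=1..T. f t (xs t)) \<le> v" unfolding v qs_cost_def by (rule sum_mono)
qed

text \<open>The summand \<open>e T\<close> on the left is what makes the bound inductive in \<open>T\<close>.\<close>

lemma sum_le_of_halving_recurrence:
  fixes e p :: "nat \<Rightarrow> real"
  assumes "1 \<le> T"
    and rec: "\<And>t. 1 \<le> t \<Longrightarrow> t < T \<Longrightarrow> e (Suc t) \<le> e t / 2 + p (Suc t)"
  shows "(\<Sum>t=1..T. e t) + e T \<le> 2 * (e 1 + (\<Sum>t=2..T. p t))"
  using assms
proof (induction T rule: dec_induct)
  case base
  show ?case by simp
next
  case (step T)
  have "e (Suc T) \<le> e T / 2 + p (Suc T)" using step.hyps step.prems by simp
  moreover have "(\<Sum>t=1..T. e t) + e T \<le> 2 * (e 1 + (\<Sum>t=2..T. p t))"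
    using step.IH step.prems by simp
  ultimately show ?case using step.hyps by simp
qed

lemma omgd_Suc:
  assumes "1 \<le> t"
  shows "omgd X L grad K x0 (Suc t) = (pgd_step X L (grad t) ^^ K) (omgd X L grad K x0 t)"
  using assms by (cases t) auto

lemma omgd_in:
  assumes "closed X" "X \<noteq> {}" "x0 \<in> X"
  shows "omgd X L grad K x0 t \<in> X"
proof (induction t)
  case (Suc t)
  show ?case
  proof (cases "t = 0")
    case False
    then have "1 \<le> t" by simp
    show ?thesis
      unfolding omgd_Suc[OF \<open>1 \<le> t\<close>] by (rule pgd_step_iterate_in[OF assms(1,2) Suc.IH])
  qed (simp add: assms)
qed (simp add: assms)

locale omgd_setting =
  fixes X :: "'a::euclidean_space set" and f :: "nat \<Rightarrow> 'a \<Rightarrow> real" and grad :: "nat \<Rightarrow> 'a \<Rightarrow> 'a"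
    and T :: nat and \<mu> L G :: real and x0 :: 'a and K :: nat
  assumes T: "1 \<le> T"
    and X: "convex X" "closed X" "X \<noteq> {}" "bounded X"
    and x0: "x0 \<in> X"
    and mu: "0 < \<mu>" "\<mu> \<le> L"
    and f_cont: "\<And>t. t \<in> {1..T} \<Longrightarrow> continuous_on X (f t)"
    and strong_cvx: "\<And>t x y. t \<in> {1..T} \<Longrightarrow> x \<in> X \<Longrightarrow> y \<in> X \<Longrightarrow>
                   \<mu> / 2 * (norm (y - x))\<^sup>2 \<le> f t y - f t x - grad t x \<bullet> (y - x)"
    and smooth: "\<And>t x y. t \<in> {1..T} \<Longrightarrow> x \<in> X \<Longrightarrow> y \<in> X \<Longrightarrow>
                   f t y - f t x - grad t x \<bullet> (y - x) \<le> L / 2 * (norm (y - x))\<^sup>2"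
    and grad_bound: "\<And>t x. t \<in> {1..T} \<Longrightarrow> x \<in> X \<Longrightarrow> norm (grad t x) \<le> G"
    and K: "((L - \<mu>) / (L + \<mu>)) ^ K \<le> 1 / 4"
begin

abbreviation xalg :: "nat \<Rightarrow> 'a" where "xalg \<equiv> omgd X L grad K x0"
abbreviation xopt :: "nat \<Rightarrow> 'a" where "xopt \<equiv> xstar X f"

lemma xalg_in: "xalg t \<in> X"
  using omgd_in[OF X(2,3) x0] .

lemma xopt_minimizes:
  assumes "t \<in> {1..T}"
  shows "xopt t \<in> X \<and> (\<forall>y\<in>X. f t (xopt t) \<le> f t y)"
  using xstar_minimizes[of X f t, OF _ X(3) f_cont[OF assms]] X(2,4)
  by (simp add: compact_eq_bounded_closed)

lemma G_nonneg: "0 \<le> G"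
proof -
  obtain x where "x \<in> X" using X(3) by blast
  then have "norm (grad 1 x) \<le> G" using grad_bound T by simp
  then show ?thesis using norm_ge_zero[of "grad 1 x"] by linarith
qed

lemma xalg_halves_distance_to_xopt:
  assumes "1 \<le> t" "t < T"
  shows "norm (xalg (Suc t) - xopt t) \<le> norm (xalg t - xopt t) / 2"
proof -
  have t: "t \<in> {1..T}" using assms by simp
  have "(norm (xalg (Suc t) - xopt t))\<^sup>2 \<le> ((L - \<mu>) / (L + \<mu>)) ^ K * (norm (xalg t - xopt t))\<^sup>2"
    unfolding omgd_Suc[OF assms(1)]
    using pgd_step_iterate_contraction[OF X(1-3) mu xalg_in conjunct1[OF xopt_minimizes[OF t]]
        conjunct2[OF xopt_minimizes[OF t]] strong_cvx[OF t] smooth[OF t]] .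
  also have "\<dots> \<le> 1 / 4 * (norm (xalg t - xopt t))\<^sup>2"
    using K by (rule mult_right_mono) simp
  also have "\<dots> = (norm (xalg t - xopt t) / 2)\<^sup>2" by (simp add: power_divide)
  finally show ?thesis by (rule power2_le_imp_le) simp
qed

lemma tracking_error_recurrence:
  assumes "1 \<le> t" "t < T"
  shows "norm (xalg (Suc t) - xopt (Suc t))
           \<le> norm (xalg t - xopt t) / 2 + norm (xopt (Suc t) - xopt t)"
  using norm_triangle_ineq[of "xalg (Suc t) - xopt t" "xopt t - xopt (Suc t)"]
    xalg_halves_distance_to_xopt[OF assms] by (simp add: norm_minus_commute)

lemma hitting_cost_le:
  assumes t: "t \<in> {1..T}"
  shows "f t (xalg t) - f t (xopt t) \<le> G * norm (xalg t - xopt t)"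
proof -
  have "f t (xalg t) - f t (xopt t) \<le> grad t (xalg t) \<bullet> (xalg t - xopt t)"
  proof -
    have "0 \<le> \<mu> / 2 * (norm (xopt t - xalg t))\<^sup>2" using mu(1) by simp
    moreover have "grad t (xalg t) \<bullet> (xopt t - xalg t) = - (grad t (xalg t) \<bullet> (xalg t - xopt t))"
      by (simp add: inner_diff_right)
    ultimately show ?thesis
      using strong_cvx[OF t xalg_in[of t] conjunct1[OF xopt_minimizes[OF t]]] by linarith
  qed
  also have "\<dots> \<le> norm (grad t (xalg t)) * norm (xalg t - xopt t)"
    by (rule norm_cauchy_schwarz)
  also have "\<dots> \<le> G * norm (xalg t - xopt t)"
    using grad_bound[OF t xalg_in[of t]] by (rule mult_right_mono) simp
  finally show ?thesis .
qed

lemma switching_cost_le: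
  assumes "1 \<le> t" "t < T"
  shows "(norm (xalg (Suc t) - xalg t))\<^sup>2 / 2 \<le> 3 / 4 * diameter X * norm (xalg t - xopt t)"
proof -
  define s where "s = norm (xalg (Suc t) - xalg t)"
  have "s \<le> diameter X"
    using diameter_bounded_bound[OF X(4) xalg_in xalg_in] by (simp add: s_def dist_norm)
  have "s \<le> norm (xalg (Suc t) - xopt t) + norm (xopt t - xalg t)"
    unfolding s_def by (rule norm_diff_triangle_le[OF order_refl order_refl])
  then have "s \<le> 3 / 2 * norm (xalg t - xopt t)"
    using xalg_halves_distance_to_xopt[OF assms] by (simp add: norm_minus_commute)
  have "s\<^sup>2 \<le> diameter X * s"
    using mult_right_mono[OF \<open>s \<le> diameter X\<close>, of s] by (simp add: s_def power2_eq_square)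
  also have "\<dots> \<le> diameter X * (3 / 2 * norm (xalg t - xopt t))"
    using \<open>s \<le> 3 / 2 * _\<close> diameter_ge_0[OF X(4)] by (rule mult_left_mono)
  finally show ?thesis by (simp add: s_def)
qed

lemma switching_cost_sum_le:
  "(\<Sum>t=1..T. 1 / 2 * (norm (xalg t - (if t = 1 then x0 else xalg (t - 1))))\<^sup>2)
     \<le> 3 / 4 * diameter X * (\<Sum>t=1..T. norm (xalg t - xopt t))"
proof -
  define s where "s t = 1 / 2 * (norm (xalg t - (if t = 1 then x0 else xalg (t - 1))))\<^sup>2" for t
  define e where "e t = norm (xalg t - xopt t)" for t
  obtain n where n: "T = Suc n" using T by (cases T) auto
  have "(\<Sum>t=1..T. s t) = s 1 + (\<Sum>t=1..n. s (Suc t))"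
    unfolding n One_nat_def sum.shift_bounds_cl_Suc_ivl by (simp add: sum.atLeast_Suc_atMost)
  also have "\<dots> = (\<Sum>t=1..n. s (Suc t))"
    \<comment> \<open>OMGD starts with \<open>x\<^sub>1 = x\<^sub>0\<close>, so the first round costs nothing to switch\<close>
    by (simp add: s_def)
  also have "\<dots> \<le> (\<Sum>t=1..n. 3 / 4 * diameter X * e t)"
    using switching_cost_le by (intro sum_mono) (auto simp: s_def e_def n)
  also have "\<dots> \<le> (\<Sum>t=1..T. 3 / 4 * diameter X * e t)"
    using diameter_ge_0[OF X(4)] by (intro sum_mono2) (auto simp: n e_def)
  finally show ?thesis by (simp add: s_def e_def sum_distrib_left)
qed

lemma regret_bound:
  "qs_cost f T x0 xalg - C_OPT X f T x0
     \<le> (2 * G + 3 / 2 * diameter X) * (norm (x0 - xopt 1) + path_length X f T)"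
proof -
  define e where "e t = norm (xalg t - xopt t)" for t
  have "qs_cost f T x0 xalg - C_OPT X f T x0
        \<le> (\<Sum>t=1..T. f t (xalg t) - f t (xopt t))
           + (\<Sum>t=1..T. 1 / 2 * (norm (xalg t - (if t = 1 then x0 else xalg (t - 1))))\<^sup>2)"
    using sum_minima_le_C_OPT[OF X(3), of T f xopt x0] xopt_minimizes
    by (simp add: qs_cost_def sum.distrib sum_subtractf)
  also have "\<dots> \<le> (G + 3 / 4 * diameter X) * (\<Sum>t=1..T. e t)"
  proof -
    have "(\<Sum>t=1..T. f t (xalg t) - f t (xopt t)) \<le> G * (\<Sum>t=1..T. e t)"
      unfolding sum_distrib_left e_def by (rule sum_mono[OF hitting_cost_le])
    then show ?thesis using switching_cost_sum_le by (simp add: e_def distrib_right)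
  qed
  also have "\<dots> \<le> (G + 3 / 4 * diameter X) * (2 * (e 1 + path_length X f T))"
  proof (rule mult_left_mono)
    show "(\<Sum>t=1..T. e t) \<le> 2 * (e 1 + path_length X f T)"
    proof -
      have "(\<Sum>t=1..T. e t) + e T \<le> 2 * (e 1 + path_length X f T)"
        unfolding path_length_def
        by (rule sum_le_of_halving_recurrence[OF T]) (simp add: e_def tracking_error_recurrence)
      moreover have "0 \<le> e T" by (simp add: e_def)
      ultimately show ?thesis by linarith
    qed
    show "0 \<le> G + 3 / 4 * diameter X"
      using G_nonneg diameter_ge_0[OF X(4)] by simp
  qed
  finally show ?thesis by (simp add: e_def norm_minus_commute algebra_simps)
qed

end

theorem corollary1:
  fixes X :: "'a::euclidean_space set"
    and f :: "nat \<Rightarrow> 'a \<Rightarrow> real"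
    and grad :: "nat \<Rightarrow> 'a \<Rightarrow> 'a"
    and T :: nat and \<mu> L G :: real
  assumes T: "T \<ge> 1"
    and X_ne: "X \<noteq> {}" and X_closed: "closed X" and X_convex: "convex X"
    and X_zero: "0 \<in> X" and X_bounded: "bounded X"
    and mu_pos: "0 < \<mu>" and mu_le_L: "\<mu> \<le> L"
    and f_nonneg: "\<And>t x. t \<in> {1..T} \<Longrightarrow> x \<in> X \<Longrightarrow> f t x \<ge> 0"
    and f_grad: "\<And>t x. t \<in> {1..T} \<Longrightarrow> x \<in> X \<Longrightarrow>
                   (f t has_derivative (\<lambda>h. grad t x \<bullet> h)) (at x within X)"
    and strong_cvx: "\<And>t x y. t \<in> {1..T} \<Longrightarrow> x \<in> X \<Longrightarrow> y \<in> X \<Longrightarrow>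
                   \<mu> / 2 * (norm (y - x))\<^sup>2 \<le> f t y - f t x - grad t x \<bullet> (y - x)"
    and smooth: "\<And>t x y. t \<in> {1..T} \<Longrightarrow> x \<in> X \<Longrightarrow> y \<in> X \<Longrightarrow>
                   f t y - f t x - grad t x \<bullet> (y - x) \<le> L / 2 * (norm (y - x))\<^sup>2"
    and G_max: "\<And>t. t \<in> {1..T} \<Longrightarrow>
                   (\<exists>x\<in>X. norm (grad t x) = G) \<and> (\<forall>x\<in>X. norm (grad t x) \<le> G)"
  shows "qs_cost f T 0 (omgd X L grad (nat \<lceil>(L + \<mu>) / (2 * \<mu>) * ln 4\<rceil>) 0)
           - C_OPT X f T 0
         \<le> (2 * G + diameter X * (10 - \<mu> / (2 * (\<mu> + 4))))
             * (norm (xstar X f 1) + path_length X f T)"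
proof -
  define K where "K = nat \<lceil>(L + \<mu>) / (2 * \<mu>) * ln 4\<rceil>"
  have "((L - \<mu>) / (L + \<mu>)) ^ K \<le> 1 / 4"
    by (rule contraction_factor_power_le[OF mu_pos mu_le_L]) (simp_all add: K_def real_nat_ceiling_ge)
  moreover have "continuous_on X (f t)" if "t \<in> {1..T}" for t
    using f_grad[OF that] by (rule has_derivative_continuous_on)
  ultimately interpret omgd_setting X f grad T \<mu> L G 0 K
    using assms by unfold_locales auto
  have "qs_cost f T 0 (omgd X L grad K 0) - C_OPT X f T 0
        \<le> (2 * G + 3 / 2 * diameter X) * (norm (xstar X f 1) + path_length X f T)"
    using regret_bound by simp
  also have "\<dots> \<le> (2 * G + diameter X * (10 - \<mu> / (2 * (\<mu> + 4))))
                   * (norm (xstar X f 1) + path_length X f T)"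
  proof (rule mult_right_mono)
    show "2 * G + 3 / 2 * diameter X \<le> 2 * G + diameter X * (10 - \<mu> / (2 * (\<mu> + 4)))"
      using diameter_ge_0[OF X_bounded] mu_pos by (simp add: field_simps)
    show "0 \<le> norm (xstar X f 1) + path_length X f T"
      by (simp add: path_length_def sum_nonneg)
  qed
  finally show ?thesis unfolding K_def .
qed

end
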